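(* Let $R$ be a local ring, $s\in R$ a central element, and let $E$ be an idempotent of $M_2(R;s)$ with $E\neq 0$ and $E\neq I_2$. Then: (1) if $s\in U(R)$, then $E$ is similar to $\left[\begin{smallmatrix} 1&0\\ 0&0\end{smallmatrix}\right]$; (2) if $s\in J(R)$, then $E$ is similar to $\left[\begin{smallmatrix} 1&0\\ 0&0\end{smallmatrix}\right]$ or $E$ is similar to $\left[\begin{smallmatrix} 0&0\\ 0&1\end{smallmatrix}\right]$.
   Context: All rings are associative with identity. A ring $R$ is local if $R/J(R)$ is a division ring, where $J(R)$ is the Jacobson radical; $U(R)$ is the group of units. For a ring $R$ and a central element $s\in R$, $M_2(R;s)$ denotes the ring whose elements are the $2\times 2$ arrays $\left[\begin{smallmatrix} a&b\\ c&d\end{smallmatrix}\right]$ with $a,b,c,d\in R$, with componentwise addition and multiplication $\left[\begin{smallmatrix} a&b\\ c&d\end{smallmatrix}\right]\left[\begin{smallmatrix} a'&b'\\ c'&d'\end{smallmatrix}\right]=\left[\begin{smallmatrix} aa'+s^2bc'&ab'+bd'\\ ca'+dc'&s^2cb'+dd'\end{smallmatrix}\right]$, with identity $I_2$. Two elements $A,B\in M_2(R;s)$ are similar if $B=P^{-1}AP$ for some unit $P$ of $M_2(R;s)$. *)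

theory Defs
  imports Main
begin

text \<open>Rings are modelled by the type class ring_1 (associative, with identity,
not necessarily commutative).\<close>

definition units_of_ring :: "'a::ring_1 set" where
  "units_of_ring = {u. \<exists>v. u * v = 1 \<and> v * u = 1}"

definition left_ideal :: "'a::ring_1 set \<Rightarrow> bool" where
  "left_ideal I \<longleftrightarrow> 0 \<in> I \<and> (\<forall>x\<in>I. \<forall>y\<in>I. x + y \<in> I) \<and> (\<forall>x\<in>I. - x \<in> I)
     \<and> (\<forall>r. \<forall>x\<in>I. r * x \<in> I)"

definition maximal_left_ideal :: "'a::ring_1 set \<Rightarrow> bool" where
  "maximal_left_ideal I \<longleftrightarrow> left_ideal I \<and> I \<noteq> UNIV \<and>
     (\<forall>K. left_ideal K \<and> I \<subseteq> K \<and> K \<noteq> UNIV \<longrightarrow> K = I)"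

definition jacobson :: "'a::ring_1 set" where
  "jacobson = \<Inter> {I. maximal_left_ideal I}"

text \<open>R is local iff R/J(R) is a division ring, i.e. the quotient is nontrivial
 (1 not in J) and every element not in J is invertible modulo J.\<close>
definition local_ring :: "'a::ring_1 itself \<Rightarrow> bool" where
  "local_ring _ \<longleftrightarrow> (1::'a) \<notin> jacobson \<and>
     (\<forall>x::'a. x \<notin> jacobson \<longrightarrow> (\<exists>y. x * y - 1 \<in> jacobson \<and> y * x - 1 \<in> jacobson))"

definition central :: "'a::ring_1 \<Rightarrow> bool" where
  "central s \<longleftrightarrow> (\<forall>x. s * x = x * s)"

text \<open>Elements of M_2(R;s) as quadruples (a,b,c,d) standing for [[a,b],[c,d]].\<close>
type_synonym 'a mat2 = "'a \<times> 'a \<times> 'a \<times> 'a"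

fun mmult :: "'a::ring_1 \<Rightarrow> 'a mat2 \<Rightarrow> 'a mat2 \<Rightarrow> 'a mat2" where
  "mmult s (a, b, c, d) (a', b', c', d') =
     (a * a' + s^2 * b * c', a * b' + b * d', c * a' + d * c', s^2 * c * b' + d * d')"

definition mone :: "'a::ring_1 mat2" where
  "mone = (1, 0, 0, 1)"

definition mzero :: "'a::ring_1 mat2" where
  "mzero = (0, 0, 0, 0)"

definition munit :: "'a::ring_1 \<Rightarrow> 'a mat2 \<Rightarrow> bool" where
  "munit s P \<longleftrightarrow> (\<exists>Q. mmult s P Q = mone \<and> mmult s Q P = mone)"

definition msimilar :: "'a::ring_1 \<Rightarrow> 'a mat2 \<Rightarrow> 'a mat2 \<Rightarrow> bool" where
  "msimilar s A B \<longleftrightarrow> (\<exists>P Q. mmult s P Q = mone \<and> mmult s Q P = mone \<and>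
      B = mmult s (mmult s Q A) P)"

end

theory Submission
  imports Defs
begin

text \<open>
  In a local ring every element outside \<open>J(R)\<close> is a unit and \<open>J(R)\<close> is a two-sided ideal.
  For an idempotent \<open>E = (a, b, c, d)\<close> the equations \<open>a - a\<^sup>2 = s\<^sup>2bc\<close> and \<open>d - d\<^sup>2 = s\<^sup>2cb\<close>
  then show that each of \<open>a\<close>, \<open>d\<close> lies in \<open>J\<close> or in \<open>1 + J\<close>, as soon as \<open>s\<^sup>2b\<close> or \<open>s\<^sup>2c\<close> lies
  in \<open>J\<close>; this holds when \<open>s \<in> J\<close>, and when \<open>s\<close> is a unit and \<open>b\<close> or \<open>c\<close> lies in \<open>J\<close>.
  If \<open>a\<close> and \<open>1 - d\<close> are units, the matrix \<open>(a, -b, c, 1 - d)\<close> is a unit (its Schur complement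
  is a unit) conjugating \<open>E\<close> to \<open>diag(1, 0)\<close>; if \<open>a\<close> and \<open>d\<close> are units, \<open>E\<close> is itself a unit and
  hence \<open>I\<close>; the two cases with \<open>a \<in> J\<close> follow by passing to the idempotent \<open>I - E\<close>.
  If \<open>s\<close> is a unit and \<open>c \<notin> J\<close>, the unit \<open>(a, 1 - a, c, -s\<^sup>2c)\<close> conjugates \<open>E\<close> to \<open>diag(1, 0)\<close>
  directly, and for a unit \<open>s\<close> the antidiagonal \<open>(0, 1, 1, 0)\<close> conjugates \<open>diag(0, 1)\<close> to \<open>diag(1, 0)\<close>.
\<close>

subsection \<open>The Jacobson radical\<close>

lemma mem_jacobson_iff: "x \<in> jacobson \<longleftrightarrow> (\<forall>I. maximal_left_ideal I \<longrightarrow> x \<in> I)"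
  by (auto simp: jacobson_def)

lemma left_ideal_jacobson: "left_ideal (jacobson :: 'a::ring_1 set)"
  by (auto simp: left_ideal_def mem_jacobson_iff maximal_left_ideal_def)

lemma
  shows jacobson_zero: "(0::'a::ring_1) \<in> jacobson"
    and jacobson_add: "x \<in> jacobson \<Longrightarrow> y \<in> jacobson \<Longrightarrow> (x::'a) + y \<in> jacobson"
    and jacobson_minus_iff: "- (x::'a) \<in> jacobson \<longleftrightarrow> x \<in> jacobson"
    and jacobson_mult_left: "x \<in> jacobson \<Longrightarrow> (r::'a) * x \<in> jacobson"
  using left_ideal_jacobson[where 'a='a] unfolding left_ideal_def
  by (blast, blast, metis minus_minus, blast)

lemma jacobson_diff: "x \<in> jacobson \<Longrightarrow> y \<in> jacobson \<Longrightarrow> (x::'a::ring_1) - y \<in> jacobson"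
  by (metis diff_conv_add_uminus jacobson_add jacobson_minus_iff)

lemma left_ideal_Union_chain:
  assumes "\<C> \<noteq> {}" and "\<forall>K\<in>\<C>. left_ideal K" and "subset.chain UNIV \<C>"
  shows "left_ideal (\<Union>\<C> :: 'a::ring_1 set)"
  unfolding left_ideal_def
proof (intro conjI ballI allI)
  show "0 \<in> \<Union>\<C>" using assms(1,2) by (auto simp: left_ideal_def)
next
  fix x y assume "x \<in> \<Union>\<C>" "y \<in> \<Union>\<C>"
  then obtain K K' where K: "K \<in> \<C>" "x \<in> K" "K' \<in> \<C>" "y \<in> K'" by blast
  from assms(3) K(1,3) have "K \<subseteq> K' \<or> K' \<subseteq> K" by (auto simp: subset_chain_def)
  then obtain K'' where "K'' \<in> \<C>" "x \<in> K''" "y \<in> K''" using K by blast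
  moreover have "left_ideal K''" using assms(2) \<open>K'' \<in> \<C>\<close> by blast
  ultimately show "x + y \<in> \<Union>\<C>" unfolding left_ideal_def by blast
next
  fix x r assume "x \<in> \<Union>\<C>"
  then obtain K where "K \<in> \<C>" "x \<in> K" by blast
  moreover have "left_ideal K" using assms(2) \<open>K \<in> \<C>\<close> by blast
  ultimately show "- x \<in> \<Union>\<C>" and "r * x \<in> \<Union>\<C>"
    unfolding left_ideal_def by blast+
qed

lemma left_ideal_contains_one_eq_UNIV:
  "left_ideal K \<Longrightarrow> (1::'a::ring_1) \<in> K \<Longrightarrow> K = UNIV"
  unfolding left_ideal_def by (metis UNIV_eq_I mult.right_neutral)

lemma left_ideal_in_maximal_left_ideal:
  assumes "left_ideal L" and "(1::'a::ring_1) \<notin> L"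
  obtains M where "maximal_left_ideal M" and "L \<subseteq> M"
proof -
  define \<A> where "\<A> = {K. left_ideal K \<and> L \<subseteq> K \<and> (1::'a) \<notin> K}"
  have "\<exists>M\<in>\<A>. \<forall>X\<in>\<A>. M \<subseteq> X \<longrightarrow> X = M"
  proof (rule subset_Zorn_nonempty)
    show "\<A> \<noteq> {}" using assms by (auto simp: \<A>_def)
  next
    fix \<C> assume "\<C> \<noteq> {}" and "subset.chain \<A> \<C>"
    then have "\<C> \<subseteq> \<A>" and "subset.chain UNIV \<C>"
      by (auto simp: subset_chain_def)
    with \<open>\<C> \<noteq> {}\<close> show "\<Union>\<C> \<in> \<A>"
      using left_ideal_Union_chain[of \<C>] by (auto simp: \<A>_def)
  qed
  then obtain M where M: "left_ideal M" "L \<subseteq> M" "1 \<notin> M"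
    and max: "\<And>K. K \<in> \<A> \<Longrightarrow> M \<subseteq> K \<Longrightarrow> K = M"
    by (auto simp: \<A>_def)
  have "maximal_left_ideal M"
    unfolding maximal_left_ideal_def
  proof (intro conjI allI impI)
    show "M \<noteq> UNIV" using M(3) by blast
  next
    fix K assume K: "left_ideal K \<and> M \<subseteq> K \<and> K \<noteq> UNIV"
    then have "1 \<notin> K" using left_ideal_contains_one_eq_UNIV by blast
    with K M(2) have "K \<in> \<A>" by (auto simp: \<A>_def)
    with K show "K = M" using max by blast
  qed (rule M(1))
  then show thesis using M(2) by (rule that)
qed

lemma jacobson_one_minus_left_invertible:
  assumes "(i::'a::ring_1) \<in> jacobson"
  obtains r where "r * (1 - i) = 1"
proof (rule ccontr)
  assume no_inverse: "\<not> thesis"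
  define L where "L = range (\<lambda>r. r * (1 - i))"
  have "left_ideal L"
    unfolding left_ideal_def L_def
    by (auto simp: image_iff) (metis mult_zero_left, metis distrib_right,
        metis minus_mult_left, metis mult.assoc)
  moreover have "1 \<notin> L" using no_inverse that by (auto simp: L_def)
  ultimately obtain M where M: "maximal_left_ideal M" "L \<subseteq> M"
    using left_ideal_in_maximal_left_ideal by blast
  have "1 * (1 - i) \<in> L" unfolding L_def by (rule rangeI)
  then have "1 - i \<in> M" "i \<in> M"
    using M assms by (auto simp: mem_jacobson_iff)
  then have "1 \<in> M"
    using M(1) unfolding maximal_left_ideal_def left_ideal_def by (metis diff_add_cancel)
  with M(1) show False
    using left_ideal_contains_one_eq_UNIV unfolding maximal_left_ideal_def by blast
qed

lemma jacobson_right_inverse_eq_zero: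
  assumes "(x::'a::ring_1) \<in> jacobson" and xy: "x * y = 1"
  shows "y = 0"
proof -
  obtain v where v: "v * (1 - y * x) = 1"
    using jacobson_one_minus_left_invertible jacobson_mult_left[OF assms(1)] by blast
  have "y = v * (1 - y * x) * y" using v by simp
  also have "\<dots> = v * (y - y * (x * y))" by (simp add: algebra_simps)
  finally show "y = 0" using xy by simp
qed

subsection \<open>Local rings\<close>

lemma local_ring_right_invertible_notin_jacobson:
  assumes "local_ring TYPE('a::ring_1)" and "(x::'a) * y = 1"
  shows "x \<notin> jacobson"
  using assms jacobson_right_inverse_eq_zero jacobson_zero
  by (fastforce simp: local_ring_def)

lemma local_ring_left_invertible:
  assumes "local_ring TYPE('a::ring_1)" and "(x::'a) \<notin> jacobson"
  obtains z where "z * x = 1"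
proof -
  obtain y where "y * x - 1 \<in> jacobson" using assms by (auto simp: local_ring_def)
  then have "1 - y * x \<in> jacobson" by (metis jacobson_minus_iff minus_diff_eq)
  then obtain r where "r * (1 - (1 - y * x)) = 1" by (rule jacobson_one_minus_left_invertible)
  then have "(r * y) * x = 1" by (simp add: mult.assoc)
  then show thesis by (rule that)
qed

lemma local_ring_invertible:
  assumes loc: "local_ring TYPE('a::ring_1)" and "(x::'a) \<notin> jacobson"
  obtains y where "x * y = 1" and "y * x = 1"
proof -
  obtain z where zx: "z * x = 1" using local_ring_left_invertible[OF assms] .
  then have "z \<notin> jacobson" by (rule local_ring_right_invertible_notin_jacobson[OF loc])
  then obtain w where wz: "w * z = 1" using local_ring_left_invertible[OF loc] by blast
  have "w = w * (z * x)" using zx by simp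
  also have "\<dots> = x" using wz by (simp flip: mult.assoc)
  finally show thesis using that zx wz by blast
qed

lemma local_ring_jacobson_mult_right:
  assumes loc: "local_ring TYPE('a::ring_1)" and "(x::'a) \<in> jacobson"
  shows "x * r \<in> jacobson"
proof (rule ccontr)
  assume "x * r \<notin> jacobson"
  then obtain w where "x * r * w = 1" using local_ring_invertible[OF loc] by blast
  then have "x * (r * w) = 1" by (simp add: mult.assoc)
  with assms show False using local_ring_right_invertible_notin_jacobson by blast
qed

lemma local_ring_one_minus_notin_jacobson:
  assumes "local_ring TYPE('a::ring_1)" and "(x::'a) \<in> jacobson"
  shows "1 - x \<notin> jacobson"
proof
  assume "1 - x \<in> jacobson"
  then have "(1 - x) + x \<in> jacobson" using assms(2) by (rule jacobson_add)
  with assms(1) show False by (simp add: local_ring_def)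
qed

lemma local_ring_mult_notin_jacobson:
  assumes loc: "local_ring TYPE('a::ring_1)" and "(x::'a) \<notin> jacobson" and "y \<notin> jacobson"
  shows "x * y \<notin> jacobson"
proof -
  obtain x' where "x * x' = 1" using local_ring_invertible[OF loc assms(2)] .
  moreover obtain y' where "y * y' = 1" using local_ring_invertible[OF loc assms(3)] .
  ultimately have "x * (y * y') * x' = 1" by simp
  then have "x * y * (y' * x') = 1" by (simp only: mult.assoc)
  then show ?thesis by (rule local_ring_right_invertible_notin_jacobson[OF loc])
qed

lemma local_ring_jacobson_or_one_minus:
  "local_ring TYPE('a::ring_1) \<Longrightarrow> (x::'a) * (1 - x) \<in> jacobson \<Longrightarrow> x \<in> jacobson \<or> 1 - x \<in> jacobson"
  using local_ring_mult_notin_jacobson by blast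

lemma local_ring_notin_jacobson_add:
  "(u::'a::ring_1) \<notin> jacobson \<Longrightarrow> j \<in> jacobson \<Longrightarrow> u + j \<notin> jacobson"
  using jacobson_diff by fastforce

subsection \<open>The ring $M_2(R;s)$\<close>

lemma central_power2_commute: "central s \<Longrightarrow> s^2 * x = x * (s::'a::ring_1)^2"
  unfolding central_def power2_eq_square by (metis mult.assoc)

lemma central_power2_left_commute: "central s \<Longrightarrow> x * ((s::'a::ring_1)^2 * y) = s^2 * (x * y)"
  by (metis central_power2_commute mult.assoc)

lemma mmult_assoc:
  assumes "central (s::'a::ring_1)"
  shows "mmult s (mmult s A B) C = mmult s A (mmult s B C)"
  by (cases A; cases B; cases C) (simp add: algebra_simps central_power2_left_commute[OF assms])

lemma mmult_mone [simp]: "mmult s mone A = A" "mmult s A mone = A"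
  by (cases A, simp add: mone_def)+

fun msub :: "'a::ring_1 mat2 \<Rightarrow> 'a mat2 \<Rightarrow> 'a mat2" where
  "msub (a, b, c, d) (a', b', c', d') = (a - a', b - b', c - c', d - d')"

lemma mmult_msub_left: "mmult s (msub A B) C = msub (mmult s A C) (mmult s B C)"
  by (cases A; cases B; cases C) (simp add: algebra_simps)

lemma mmult_msub_right: "mmult s A (msub B C) = msub (mmult s A B) (mmult s A C)"
  by (cases A; cases B; cases C) (simp add: algebra_simps)

lemma msub_self: "msub A A = mzero"
  by (cases A) (simp add: mzero_def)

lemma msub_mzero: "msub A mzero = A"
  by (cases A) (simp add: mzero_def)

lemma munit_mmult:
  assumes cs: "central s" and "munit s P" "munit s Q"
  shows "munit s (mmult s P Q)"
proof -
  obtain P' Q' where P': "mmult s P P' = mone" "mmult s P' P = mone"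
    and Q': "mmult s Q Q' = mone" "mmult s Q' Q = mone"
    using assms unfolding munit_def by blast
  have "mmult s (mmult s P Q) (mmult s Q' P') = mmult s P (mmult s (mmult s Q Q') P')"
    by (simp add: mmult_assoc[OF cs])
  moreover have "mmult s (mmult s Q' P') (mmult s P Q) = mmult s Q' (mmult s (mmult s P' P) Q)"
    by (simp add: mmult_assoc[OF cs])
  ultimately have "mmult s (mmult s P Q) (mmult s Q' P') = mone"
    and "mmult s (mmult s Q' P') (mmult s P Q) = mone"
    by (simp_all add: P' Q')
  then show ?thesis unfolding munit_def by blast
qed

lemma msimilar_if_intertwined:
  assumes cs: "central s" and "munit s P" and EP: "mmult s E P = mmult s P F"
  shows "msimilar s E F"
proof -
  obtain Q where PQ: "mmult s P Q = mone" "mmult s Q P = mone"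
    using assms(2) unfolding munit_def by blast
  have "F = mmult s (mmult s Q P) F" by (simp add: PQ)
  also have "\<dots> = mmult s (mmult s Q E) P" by (simp add: mmult_assoc[OF cs] EP)
  finally show ?thesis unfolding msimilar_def using PQ by blast
qed

lemma msimilar_trans:
  assumes cs: "central s" and "msimilar s E F" and "msimilar s F G"
  shows "msimilar s E G"
proof -
  obtain P Q where PQ: "mmult s P Q = mone" "mmult s Q P = mone" "F = mmult s (mmult s Q E) P"
    using assms(2) unfolding msimilar_def by blast
  obtain P' Q' where PQ': "mmult s P' Q' = mone" "mmult s Q' P' = mone"
      "G = mmult s (mmult s Q' F) P'"
    using assms(3) unfolding msimilar_def by blast
  have "munit s (mmult s P P')"
    using munit_mmult[OF cs] PQ PQ' unfolding munit_def by blast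
  moreover have "mmult s E (mmult s P P') = mmult s (mmult s P P') G"
  proof -
    have cancel: "mmult s P' (mmult s Q' X) = X" "mmult s P (mmult s Q X) = X" for X
      by (simp_all add: PQ PQ' flip: mmult_assoc[OF cs])
    show ?thesis by (simp add: PQ'(3) PQ(3) mmult_assoc[OF cs] cancel)
  qed
  ultimately show ?thesis using msimilar_if_intertwined[OF cs] by blast
qed

lemma msimilar_complement:
  assumes cs: "central s" and "msimilar s E F"
  shows "msimilar s (msub mone E) (msub mone F)"
proof -
  obtain P Q where PQ: "mmult s P Q = mone" "mmult s Q P = mone" "F = mmult s (mmult s Q E) P"
    using assms(2) unfolding msimilar_def by blast
  then have "msub mone F = mmult s (mmult s Q (msub mone E)) P"
    by (simp add: mmult_msub_left mmult_msub_right)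
  with PQ show ?thesis unfolding msimilar_def by blast
qed

lemma idempotent_complement:
  assumes "mmult s E E = E"
  shows "mmult s (msub mone E) (msub mone E) = msub mone E"
  using assms by (simp add: mmult_msub_left mmult_msub_right msub_self msub_mzero)

lemma munit_idempotent_eq_mone:
  assumes cs: "central s" and "munit s E" and "mmult s E E = E"
  shows "E = mone"
proof -
  obtain Q where Q: "mmult s Q E = mone" using assms(2) unfolding munit_def by blast
  have "E = mmult s (mmult s Q E) E" by (simp add: Q)
  also have "\<dots> = mmult s Q (mmult s E E)" by (rule mmult_assoc[OF cs])
  also have "\<dots> = mone" by (simp add: assms(3) Q)
  finally show ?thesis .
qed

lemma munit_schur_upper_left:
  assumes cs: "central (s::'a::ring_1)" and p: "p * p' = 1" "p' * p = 1"
    and schur: "(t - s^2 * r * p' * q) * e = 1" "e * (t - s^2 * r * p' * q) = 1"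
  shows "munit s (p, q, r, t)"
proof -
  define u where "u = t - s^2 * r * p' * q"
  have "p * (p' * q) = q" using p(1) by (simp flip: mult.assoc)
  then have LDU: "(p, q, r, t) = mmult s (mmult s (1, 0, r * p', 1) (p, 0, 0, u)) (1, p' * q, 0, 1)"
    using p by (simp add: u_def mult.assoc)
  have "munit s (1, 0, r * p', 1)"
    unfolding munit_def by (rule exI[of _ "(1, 0, - (r * p'), 1)"]) (simp add: mone_def)
  moreover have "munit s (p, 0, 0, u)"
    unfolding munit_def using p schur by (intro exI[of _ "(p', 0, 0, e)"]) (simp add: mone_def u_def)
  moreover have "munit s (1, p' * q, 0, 1)"
    unfolding munit_def by (rule exI[of _ "(1, - (p' * q), 0, 1)"]) (simp add: mone_def)
  ultimately show ?thesis unfolding LDU by (intro munit_mmult[OF cs])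
qed

lemma munit_schur_lower_right:
  assumes cs: "central (s::'a::ring_1)" and t: "t * t' = 1" "t' * t = 1"
    and schur: "(p - s^2 * q * t' * r) * e = 1" "e * (p - s^2 * q * t' * r) = 1"
  shows "munit s (p, q, r, t)"
proof -
  define u where "u = p - s^2 * q * t' * r"
  have "t * (t' * r) = r" using t(1) by (simp flip: mult.assoc)
  then have UDL: "(p, q, r, t) = mmult s (mmult s (1, q * t', 0, 1) (u, 0, 0, t)) (1, 0, t' * r, 1)"
    using t by (simp add: u_def mult.assoc)
  have "munit s (1, q * t', 0, 1)"
    unfolding munit_def by (rule exI[of _ "(1, - (q * t'), 0, 1)"]) (simp add: mone_def)
  moreover have "munit s (u, 0, 0, t)"
    unfolding munit_def using t schur by (intro exI[of _ "(e, 0, 0, t')"]) (simp add: mone_def u_def)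
  moreover have "munit s (1, 0, t' * r, 1)"
    unfolding munit_def by (rule exI[of _ "(1, 0, - (t' * r), 1)"]) (simp add: mone_def)
  ultimately show ?thesis unfolding UDL by (intro munit_mmult[OF cs])
qed

subsection \<open>Idempotents of $M_2(R;s)$ over a local ring\<close>

lemma corner_products_in_jacobson:
  assumes loc: "local_ring TYPE('a::ring_1)" and cs: "central (s::'a)"
    and corner: "s^2 * b \<in> jacobson \<or> s^2 * c \<in> jacobson"
  shows "s^2 * b * x * c \<in> jacobson" and "s^2 * c * x * b \<in> jacobson"
proof -
  have "s^2 * b * x * c = (s^2 * b) * (x * c)" "s^2 * b * x * c = (b * x) * (s^2 * c)"
    "s^2 * c * x * b = (s^2 * c) * (x * b)" "s^2 * c * x * b = (c * x) * (s^2 * b)"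
    by (simp_all add: mult.assoc central_power2_left_commute[OF cs])
  then show "s^2 * b * x * c \<in> jacobson" and "s^2 * c * x * b \<in> jacobson"
    using corner jacobson_mult_left local_ring_jacobson_mult_right[OF loc] by metis+
qed

lemma idempotent_similar_E11:
  assumes loc: "local_ring TYPE('a::ring_1)" and cs: "central (s::'a)"
    and idem: "mmult s (a, b, c, d) (a, b, c, d) = (a, b, c, d)"
    and "a \<notin> jacobson" and "1 - d \<notin> jacobson"
    and corner: "\<And>x. s^2 * c * x * b \<in> jacobson"
  shows "msimilar s (a, b, c, d) (1, 0, 0, 0)"
proof -
  obtain a' where a': "a * a' = 1" "a' * a = 1" using local_ring_invertible[OF loc \<open>a \<notin> jacobson\<close>] .
  have "(1 - d) - s^2 * c * a' * (- b) \<notin> jacobson"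
    using local_ring_notin_jacobson_add[OF \<open>1 - d \<notin> jacobson\<close> corner[of a']] by simp
  then obtain e where "((1 - d) - s^2 * c * a' * (- b)) * e = 1"
      "e * ((1 - d) - s^2 * c * a' * (- b)) = 1"
    using local_ring_invertible[OF loc] by blast
  then have "munit s (a, - b, c, 1 - d)" by (rule munit_schur_upper_left[OF cs a'])
  moreover have "mmult s (a, b, c, d) (a, - b, c, 1 - d) = mmult s (a, - b, c, 1 - d) (1, 0, 0, 0)"
    using idem by (simp add: algebra_simps)
  ultimately show ?thesis by (rule msimilar_if_intertwined[OF cs])
qed

lemma idempotent_invertible_diagonal_eq_mone:
  assumes loc: "local_ring TYPE('a::ring_1)" and cs: "central (s::'a)"
    and idem: "mmult s (a, b, c, d) (a, b, c, d) = (a, b, c, d)"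
    and "a \<notin> jacobson" and "d \<notin> jacobson"
    and corner: "\<And>x. s^2 * c * x * b \<in> jacobson"
  shows "(a, b, c, d) = mone"
proof -
  obtain a' where a': "a * a' = 1" "a' * a = 1" using local_ring_invertible[OF loc \<open>a \<notin> jacobson\<close>] .
  have "d + - (s^2 * c * a' * b) \<notin> jacobson"
    using local_ring_notin_jacobson_add[OF \<open>d \<notin> jacobson\<close>] corner jacobson_minus_iff by blast
  then obtain e where "(d - s^2 * c * a' * b) * e = 1" "e * (d - s^2 * c * a' * b) = 1"
    using local_ring_invertible[OF loc] by (metis diff_conv_add_uminus)
  then have "munit s (a, b, c, d)" by (rule munit_schur_upper_left[OF cs a'])
  then show ?thesis by (rule munit_idempotent_eq_mone[OF cs _ idem])
qed

lemma idempotent_eq_mone_or_similar_E11: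
  assumes loc: "local_ring TYPE('a::ring_1)" and cs: "central (s::'a)"
    and idem: "mmult s (a, b, c, d) (a, b, c, d) = (a, b, c, d)"
    and "a \<notin> jacobson" and corner: "s^2 * b \<in> jacobson \<or> s^2 * c \<in> jacobson"
  shows "(a, b, c, d) = mone \<or> msimilar s (a, b, c, d) (1, 0, 0, 0)"
proof -
  have cb: "s^2 * c * x * b \<in> jacobson" for x
    by (rule corner_products_in_jacobson(2)[OF loc cs corner])
  have "d * (1 - d) = s^2 * c * 1 * b"
    using idem by (simp add: algebra_simps)
  then consider "d \<notin> jacobson" | "1 - d \<notin> jacobson"
    using local_ring_jacobson_or_one_minus[OF loc] local_ring_one_minus_notin_jacobson[OF loc] cb
    by metis
  then show ?thesis
    using idempotent_invertible_diagonal_eq_mone[OF loc cs idem \<open>a \<notin> jacobson\<close> _ cb]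
      idempotent_similar_E11[OF loc cs idem \<open>a \<notin> jacobson\<close> _ cb]
    by cases blast+
qed

lemma idempotent_similar_E11_or_E22:
  assumes loc: "local_ring TYPE('a::ring_1)" and cs: "central (s::'a)"
    and idem: "mmult s (a, b, c, d) (a, b, c, d) = (a, b, c, d)"
    and "(a, b, c, d) \<noteq> mzero" and "(a, b, c, d) \<noteq> mone"
    and corner: "s^2 * b \<in> jacobson \<or> s^2 * c \<in> jacobson"
  shows "msimilar s (a, b, c, d) (1, 0, 0, 0) \<or> msimilar s (a, b, c, d) (0, 0, 0, 1)"
proof -
  have "a * (1 - a) = s^2 * b * 1 * c"
    using idem by (simp add: algebra_simps)
  then consider "a \<notin> jacobson" | "1 - a \<notin> jacobson"
    using local_ring_jacobson_or_one_minus[OF loc] local_ring_one_minus_notin_jacobson[OF loc]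
      corner_products_in_jacobson(1)[OF loc cs corner]
    by metis
  then show ?thesis
  proof cases
    case 1
    then show ?thesis
      using idempotent_eq_mone_or_similar_E11[OF loc cs idem _ corner] \<open>(a, b, c, d) \<noteq> mone\<close>
      by blast
  next
    case 2
    have complement: "msub mone (a, b, c, d) = (1 - a, - b, - c, 1 - d)"
      by (simp add: mone_def)
    have "mmult s (1 - a, - b, - c, 1 - d) (1 - a, - b, - c, 1 - d) = (1 - a, - b, - c, 1 - d)"
      using idempotent_complement[OF idem] by (simp only: complement)
    moreover have "s^2 * - b \<in> jacobson \<or> s^2 * - c \<in> jacobson"
      using corner by (simp add: jacobson_minus_iff)
    ultimately have "(1 - a, - b, - c, 1 - d) = mone
        \<or> msimilar s (1 - a, - b, - c, 1 - d) (1, 0, 0, 0)"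
      using idempotent_eq_mone_or_similar_E11[OF loc cs] 2 by blast
    then show ?thesis
    proof
      assume "(1 - a, - b, - c, 1 - d) = mone"
      with \<open>(a, b, c, d) \<noteq> mzero\<close> show ?thesis by (simp add: mone_def mzero_def)
    next
      assume "msimilar s (1 - a, - b, - c, 1 - d) (1, 0, 0, 0)"
      then have "msimilar s (msub mone (1 - a, - b, - c, 1 - d)) (msub mone (1, 0, 0, 0))"
        by (rule msimilar_complement[OF cs])
      then show ?thesis by (simp add: mone_def)
    qed
  qed
qed

lemma idempotent_similar_E11_of_invertible_lower_left:
  assumes loc: "local_ring TYPE('a::ring_1)" and cs: "central (s::'a)"
    and idem: "mmult s (a, b, c, d) (a, b, c, d) = (a, b, c, d)"
    and "s \<notin> jacobson" and "c \<notin> jacobson"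
  shows "msimilar s (a, b, c, d) (1, 0, 0, 0)"
proof -
  have "s^2 * c \<notin> jacobson"
    using assms(4,5) local_ring_mult_notin_jacobson[OF loc] by (simp add: power2_eq_square)
  then obtain t' where t': "- (s^2 * c) * t' = 1" "t' * - (s^2 * c) = 1"
    using local_ring_invertible[OF loc] jacobson_minus_iff by metis
  have "s^2 * (t' * c) = -1"
    using t'(2) central_power2_left_commute[OF cs, of t' c] by (simp add: minus_equation_iff)
  have "s^2 * (1 - a) * t' * c = (1 - a) * (s^2 * (t' * c))"
    by (simp add: mult.assoc central_power2_left_commute[OF cs])
  also have "\<dots> = a - 1" using \<open>s^2 * (t' * c) = -1\<close> by simp
  finally have "a - s^2 * (1 - a) * t' * c = 1" by simp
  then have "munit s (a, 1 - a, c, - (s^2 * c))"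
    using munit_schur_lower_right[OF cs t', of a "1 - a" c 1] by simp
  moreover have "s^2 * (c * a) + s^2 * (d * c) = s^2 * c"
    using idem by (simp flip: distrib_left)
  then have "mmult s (a, b, c, d) (a, 1 - a, c, - (s^2 * c))
      = mmult s (a, 1 - a, c, - (s^2 * c)) (1, 0, 0, 0)"
    using idem by (simp add: algebra_simps central_power2_left_commute[OF cs])
  ultimately show ?thesis by (rule msimilar_if_intertwined[OF cs])
qed

lemma msimilar_E22_E11:
  assumes cs: "central (s::'a::ring_1)" and "s * v = 1"
  shows "msimilar s (0, 0, 0, 1) (1, 0, 0, 0)"
proof -
  have "s^2 * v^2 = 1"
    using assms(2) by (simp add: power2_eq_square mult.assoc) (simp flip: mult.assoc)
  then have "munit s (0, 1, 1, 0)"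
    unfolding munit_def by (intro exI[of _ "(0, v^2, v^2, 0)"]) (simp add: mone_def)
  then show ?thesis by (rule msimilar_if_intertwined[OF cs]) simp
qed

theorem lemma2p7:
  fixes s :: "'a::ring_1" and E :: "'a mat2"
  assumes "local_ring TYPE('a)"
    and "central s"
    and "mmult s E E = E"
    and "E \<noteq> mzero" and "E \<noteq> mone"
  shows "(s \<in> units_of_ring \<longrightarrow> msimilar s E (1, 0, 0, 0))
       \<and> (s \<in> jacobson \<longrightarrow> msimilar s E (1, 0, 0, 0) \<or> msimilar s E (0, 0, 0, 1))"
proof -
  note loc = assms(1) and cs = assms(2)
  obtain a b c d where E: "E = (a, b, c, d)" by (cases E)
  note dichotomy = idempotent_similar_E11_or_E22[OF loc cs assms(3-5)[unfolded E]]
  have "msimilar s E (1, 0, 0, 0)" if unit: "s \<in> units_of_ring"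
  proof -
    obtain v where v: "s * v = 1" "v * s = 1" using unit unfolding units_of_ring_def by blast
    then have "s \<notin> jacobson" using local_ring_right_invertible_notin_jacobson[OF loc] by blast
    show ?thesis
    proof (cases "s^2 * b \<in> jacobson \<or> s^2 * c \<in> jacobson")
      case True
      then show ?thesis
        using dichotomy msimilar_trans[OF cs _ msimilar_E22_E11[OF cs v(1)]] E by blast
    next
      case False
      then have "c \<notin> jacobson" using jacobson_mult_left by blast
      with \<open>s \<notin> jacobson\<close> show ?thesis
        using idempotent_similar_E11_of_invertible_lower_left[OF loc cs assms(3)[unfolded E]] E
        by blast
    qed
  qed
  moreover have "s^2 * b \<in> jacobson" if "s \<in> jacobson"
    using jacobson_mult_left[OF jacobson_mult_left[OF that, of s], of b]
      central_power2_commute[OF cs, of b]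
    by (simp add: power2_eq_square)
  ultimately show ?thesis using dichotomy E by blast
qed

end
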